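(* For $a,b\ge0$ let $p_\bullet(a,b)=(p_k(a,b))_{k\in\mathbb{Z}}:=\mathrm{Poi}_a*\widehat{\mathrm{Poi}}_b$, i.e. $p_k(a,b)=\mathbb{P}(X-Y=k)$ for independent $X\sim\mathrm{Poi}_a$, $Y\sim\mathrm{Poi}_b$. Then for all $k\in\mathbb{Z}$, \[ \sqrt{p_k(a,b)\,p_{-k}(a,b)}=e^{-(\sqrt a-\sqrt b)^2}\,p_k\big(\sqrt{ab},\sqrt{ab}\big). \]
   Context: $\mathrm{Poi}_\lambda$ is the Poisson distribution with parameter $\lambda$, with $\mathrm{Poi}_0$ the point mass at $0$; $\widehat{\mathrm{Poi}}_b$ is its image under $k\mapsto-k$. *)

theory Defs
  imports "HOL-Probability.Probability"
begin

text \<open>Poisson distribution with parameter lam >= 0; Poi_0 is the point mass at 0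
  (the library's poisson_pmf is only specified for positive rate).\<close>
definition poi :: "real \<Rightarrow> nat pmf" where
  "poi lam = (if lam = 0 then return_pmf 0 else poisson_pmf lam)"

definition skellam :: "real \<Rightarrow> real \<Rightarrow> int pmf" where
  "skellam a b = map_pmf (\<lambda>(x, y). int x - int y) (pair_pmf (poi a) (poi b))"

definition pk :: "int \<Rightarrow> real \<Rightarrow> real \<Rightarrow> real" where
  "pk k a b = pmf (skellam a b) k"

end

theory Submission
  imports Defs
begin

text \<open>Conditioning on the value y of the subtracted Poisson variable gives, for m \<ge> 0,
  p_m(a,b) = e^{-(a+b)} a^m S_m(ab) and p_{-m}(a,b) = e^{-(a+b)} b^m S_m(ab) with the
  power series S_m(x) = \<Sum>_y x^y / (y! (m+y)!). Hence the geometric mean of p_k(a,b) and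
  p_{-k}(a,b) is e^{-(a+b)} (\<surd>(ab))^|k| S_|k|(ab), whereas p_k(c,c) = e^{-2c} c^|k| S_|k|(c^2)
  for c = \<surd>(ab); the two differ exactly by e^{-(a+b)+2c} = e^{-(\<surd>a-\<surd>b)^2}.\<close>

lemma pmf_bind_nat_sums:
  fixes N :: "nat pmf"
  shows "(\<lambda>y. pmf N y * pmf (f y) i) sums pmf (bind_pmf N f) i"
proof -
  have "ennreal (pmf (bind_pmf N f) i) = (\<Sum>y. ennreal (pmf N y * pmf (f y) i))"
    by (simp add: ennreal_pmf_bind nn_integral_measure_pmf nn_integral_count_space_nat ennreal_mult')
  then have "(\<lambda>y. ennreal (pmf N y * pmf (f y) i)) sums ennreal (pmf (bind_pmf N f) i)"
    by (simp add: summable_sums)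
  then show ?thesis by simp
qed

lemma pmf_poi: "lam \<ge> 0 \<Longrightarrow> pmf (poi lam) n = exp (- lam) * lam ^ n / fact n"
  by (cases "n = 0") (auto simp: poi_def pmf_return)

lemma skellam_eq_bind: "skellam a b = bind_pmf (poi b) (\<lambda>y. map_pmf (\<lambda>x. int x - int y) (poi a))"
  unfolding skellam_def pair_pmf_def
  by (subst bind_commute_pmf) (simp add: map_bind_pmf bind_return_pmf map_pmf_def bind_assoc_pmf)

lemma pk_uminus: "pk (- k) a b = pk k b a"
proof -
  have "skellam b a = map_pmf uminus (skellam a b)"
    unfolding skellam_def by (subst pair_commute_pmf) (simp add: pmf.map_comp o_def case_prod_beta)
  then show ?thesis
    unfolding pk_def by (metis inj_def neg_equal_iff_equal pmf_map_inj' minus_minus)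
qed

lemma pk_of_nat_sums: "(\<lambda>y. pmf (poi b) y * pmf (poi a) (m + y)) sums pk (int m) a b"
proof -
  have "pmf (map_pmf (\<lambda>x. int x - int y) (poi a)) (int m) = pmf (poi a) (m + y)" for y
    using pmf_map_inj'[of "\<lambda>x. int x - int y" "poi a" "m + y"] by (simp add: inj_def)
  then show ?thesis
    using pmf_bind_nat_sums[of "poi b" "\<lambda>y. map_pmf (\<lambda>x. int x - int y) (poi a)" "int m"]
    unfolding pk_def skellam_eq_bind by simp
qed

text \<open>The modified Bessel function satisfies I_m(2\<surd>x) = x^{m/2} * bessel_series m x.\<close>
definition bessel_series :: "nat \<Rightarrow> real \<Rightarrow> real" where
  "bessel_series m x = (\<Sum>y. x ^ y / (fact y * fact (m + y)))"

lemma summable_bessel_series: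
  fixes x :: real
  assumes "x \<ge> 0"
  shows "summable (\<lambda>y. x ^ y / (fact y * fact (m + y)))"
proof (rule summable_comparison_test[OF _ summable_exp[of x]])
  have "x ^ n / (fact n * fact (m + n)) \<le> x ^ n / fact n" for n
    using assms by (intro divide_left_mono) auto
  then show "\<exists>N. \<forall>n\<ge>N. norm (x ^ n / (fact n * fact (m + n))) \<le> inverse (fact n) * x ^ n"
    using assms by (simp add: field_simps)
qed

lemma bessel_series_nonneg: "x \<ge> 0 \<Longrightarrow> bessel_series m x \<ge> 0"
  unfolding bessel_series_def by (rule suminf_nonneg[OF summable_bessel_series]) auto

lemma pk_of_nat:
  assumes "a \<ge> 0" "b \<ge> 0"
  shows "pk (int m) a b = exp (- (a + b)) * a ^ m * bessel_series m (a * b)"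
proof -
  have "pmf (poi b) y * pmf (poi a) (m + y)
          = exp (- (a + b)) * a ^ m * ((a * b) ^ y / (fact y * fact (m + y)))" for y
    using assms by (simp add: pmf_poi power_add power_mult_distrib exp_add[symmetric] field_simps)
  moreover have "(\<lambda>y. exp (- (a + b)) * a ^ m * ((a * b) ^ y / (fact y * fact (m + y))))
                   sums (exp (- (a + b)) * a ^ m * bessel_series m (a * b))"
    unfolding bessel_series_def using assms by (intro sums_mult summable_sums summable_bessel_series) simp
  ultimately show ?thesis
    using pk_of_nat_sums[of b a m] by (simp add: sums_unique2)
qed

lemma pk_eq:
  assumes "a \<ge> 0" "b \<ge> 0"
  shows "pk k a b = exp (- (a + b)) * (if k \<ge> 0 then a else b) ^ nat \<bar>k\<bar> * bessel_series (nat \<bar>k\<bar>) (a * b)"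
proof (cases "k \<ge> 0")
  case True
  then show ?thesis using pk_of_nat[OF assms, of "nat k"] by simp
next
  case False
  then have "pk k a b = pk (int (nat \<bar>k\<bar>)) b a"
    using pk_uminus[of "- k" a b] by simp
  with False show ?thesis
    using pk_of_nat[OF assms(2,1), of "nat \<bar>k\<bar>"] by (simp add: add.commute mult.commute)
qed

theorem lemma1:
  fixes a b :: real and k :: int
  assumes "a \<ge> 0" and "b \<ge> 0"
  shows "sqrt (pk k a b * pk (-k) a b)
           = exp (- (sqrt a - sqrt b)\<^sup>2) * pk k (sqrt (a * b)) (sqrt (a * b))"
proof -
  define n where "n = nat \<bar>k\<bar>"
  define c where "c = sqrt (a * b)"
  define S where "S = bessel_series n (a * b)"
  have c: "c \<ge> 0" "c * c = a * b" "sqrt a * sqrt b = c"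
    using assms by (simp_all add: c_def flip: real_sqrt_mult)
  have "(if k \<ge> 0 then a else b) ^ n * (if - k \<ge> 0 then a else b) ^ n = (c ^ n)\<^sup>2"
    using c(2) by (auto simp: n_def mult.commute power_mult_distrib[symmetric] power2_eq_square simp flip: power_mult)
  then have "pk k a b * pk (- k) a b = (exp (- (a + b)) * c ^ n * S)\<^sup>2"
    unfolding pk_eq[OF assms, of k] pk_eq[OF assms, of "- k"]
    by (simp add: n_def S_def power2_eq_square power_mult_distrib mult_ac)
  moreover have "exp (- (a + b)) * c ^ n * S \<ge> 0"
    using c(1) assms by (simp add: S_def bessel_series_nonneg)
  moreover have "pk k c c = exp (- (2 * c)) * c ^ n * S"
    using pk_eq[OF c(1) c(1), of k] c(2) by (auto simp: n_def S_def)
  moreover have "exp (- (sqrt a - sqrt b)\<^sup>2) * exp (- (2 * c)) = exp (- (a + b))"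
    using assms c(3) by (simp add: power2_eq_square algebra_simps flip: exp_add)
  ultimately show ?thesis
    by (simp add: c_def[symmetric] mult.assoc[symmetric])
qed

end
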